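(* Let $p_1,\dots,p_n$ be distinct primes with $p_1\equiv 3\pmod 8$ and $p_i\equiv 5\pmod 8$ for $2\leq i\leq n$; put $d_1=4p_1$, $d_i=p_i$ for $2\leq i\leq n$, and $D=d_1\cdots d_n=4p_1\cdots p_n$. Let \[\mathcal{G}=\{a\in\mathbb{Z}: 1\leq a\leq D,\ \chi_{d_i}(a)=1\text{ for all }1\leq i\leq n\}\] and $\mathfrak{t}_1=\sum_{a\in\mathcal{G}}a^2$. Then $\mathfrak{t}_1\equiv 2^n\mathfrak{y}\pmod{16}$ for some odd integer $\mathfrak{y}$. In particular, if $n\geq 4$ then $v(\mathfrak{t}_1)\geq 4$.
   Context: For a positive integer $M$, $\chi_M(a)=\left(\frac{M}{a}\right)$ denotes the Kronecker–Jacobi symbol. $v$ denotes the $2$-adic valuation on $\mathbb{Q}$ normalized by $v(2)=1$. *)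

theory Defs
  imports "HOL-Number_Theory.Number_Theory"
begin

definition kron_prime :: "int \<Rightarrow> int \<Rightarrow> int" where
  "kron_prime M p =
     (if p = 2 then (if even M then 0 else if M mod 8 = 1 \<or> M mod 8 = 7 then 1 else -1)
      else Legendre M p)"

definition kronecker :: "int \<Rightarrow> int \<Rightarrow> int" where
  "kronecker M a =
     (if a = 0 then (if \<bar>M\<bar> = 1 then 1 else 0)
      else (if a < 0 \<and> M < 0 then -1 else 1) *
        (\<Prod>p\<in>prime_factors \<bar>a\<bar>. kron_prime M p ^ multiplicity p \<bar>a\<bar>))"

end

(*
  For a > 0, quadratic reciprocity turns the conditions chi_{d_i}(a) = 1 into conditions on
  Legendre symbols (a/p_i) and on a mod 4, all periodic modulo D.  By the Chinese remainder
  theorem, G therefore has (p_1 - 1) * prod_{i >= 2} (p_i - 1)/2 elements, which is 2^n times an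
  odd number because p_1 = 3 and p_i = 5 (mod 8).  Since (-1/p_1) = -1 = chi_{-4}(-1) and
  (-1/p_i) = 1, the set G is invariant under a |-> D - a; as D = 4 (mod 8) and a is odd, each
  pair contributes a^2 + (D - a)^2 = 10 (mod 16), so t_1 = 5 |G| (mod 16).
*)
theory Submission
  imports Defs
begin

lemma euler_criterion_int:
  fixes p :: int
  assumes "prime p" "p > 2"
  shows "[Legendre a p = a ^ nat ((p - 1) div 2)] (mod p)"
proof -
  have "prime (nat p)" "2 < nat p" using assms by auto
  from euler_criterion[OF this, of a]
  have "[Legendre a (int (nat p)) = a ^ ((nat p - 1) div 2)] (mod int (nat p))" .
  moreover have "(nat p - 1) div 2 = nat ((p - 1) div 2)"
    using assms by (simp add: nat_div_distrib nat_diff_distrib)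
  ultimately show ?thesis using assms by simp
qed

lemma Legendre_cases: "Legendre a p \<in> {-1, 0, 1}"
  by (auto simp: Legendre_def)

lemma Legendre_eq_0_iff: "Legendre a p = 0 \<longleftrightarrow> p dvd a"
  by (auto simp: Legendre_def cong_0_iff)

lemma Legendre_square:
  fixes p :: int
  assumes "prime p" "\<not> p dvd y"
  shows "Legendre (y\<^sup>2) p = 1"
proof -
  have "\<not> p dvd y\<^sup>2" using assms prime_dvd_power_iff[OF assms(1), of 2] by simp
  moreover have "QuadRes p (y\<^sup>2)" unfolding QuadRes_def by (blast intro: cong_refl)
  ultimately show ?thesis by (simp add: Legendre_def cong_0_iff)
qed

lemma Legendre_cong:
  assumes "[a = b] (mod p)"
  shows "Legendre a p = Legendre b p"
proof -
  have "QuadRes p a = QuadRes p b"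
    unfolding QuadRes_def using assms by (meson cong_sym cong_trans)
  moreover have "[a = 0] (mod p) = [b = 0] (mod p)"
    using assms by (meson cong_sym cong_trans)
  ultimately show ?thesis by (simp add: Legendre_def)
qed

lemma Legendre_mod [simp]: "Legendre (a mod p) p = Legendre a p"
  by (rule Legendre_cong) (simp add: cong_def)

lemma cong_sign_values_imp_eq:
  fixes p x y :: int
  assumes "p > 2" "x \<in> {-1, 0, 1}" "y \<in> {-1, 0, 1}" "[x = y] (mod p)"
  shows "x = y"
proof (rule ccontr)
  assume "x \<noteq> y"
  have "p dvd x - y" using assms(4) by (simp add: cong_iff_dvd_diff)
  then have "\<bar>p\<bar> \<le> \<bar>x - y\<bar>" using \<open>x \<noteq> y\<close> dvd_imp_le_int by simp
  moreover have "\<bar>x - y\<bar> \<le> 2" using assms(2,3) by auto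
  ultimately show False using assms(1) by simp
qed

lemma Legendre_mult:
  fixes p :: int
  assumes "prime p" "p > 2"
  shows "Legendre (a * b) p = Legendre a p * Legendre b p"
proof (rule cong_sign_values_imp_eq[OF assms(2) Legendre_cases])
  let ?h = "nat ((p - 1) div 2)"
  show "Legendre a p * Legendre b p \<in> {-1, 0, 1}"
    using Legendre_cases[of a p] Legendre_cases[of b p] by auto
  have "[Legendre (a * b) p = a ^ ?h * b ^ ?h] (mod p)"
    using euler_criterion_int[OF assms, of "a * b"] by (simp add: power_mult_distrib)
  moreover have "[Legendre a p * Legendre b p = a ^ ?h * b ^ ?h] (mod p)"
    using euler_criterion_int[OF assms, of a] euler_criterion_int[OF assms, of b]
    by (rule cong_mult)
  ultimately show "[Legendre (a * b) p = Legendre a p * Legendre b p] (mod p)"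
    by (meson cong_sym cong_trans)
qed

lemma minus_one_power_nat:
  fixes k :: int
  assumes "k \<ge> 0"
  shows "(-1::int) ^ nat k = (if even k then 1 else -1)"
  using assms by (simp add: minus_one_power_iff even_nat_iff)

lemma Legendre_minus_one:
  fixes p :: int
  assumes "prime p" "p > 2"
  shows "Legendre (-1) p = (if p mod 4 = 1 then 1 else -1)"
proof (rule cong_sign_values_imp_eq[OF assms(2) Legendre_cases])
  have "odd p" using assms prime_odd_int by blast
  then have "even ((p - 1) div 2) \<longleftrightarrow> p mod 4 = 1" by presburger
  then have "(-1::int) ^ nat ((p - 1) div 2) = (if p mod 4 = 1 then 1 else -1)"
    using assms minus_one_power_nat[of "(p - 1) div 2"] by simp
  then show "[Legendre (-1) p = (if p mod 4 = 1 then 1 else -1)] (mod p)"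
    using euler_criterion_int[OF assms, of "-1"] by simp
qed simp

lemma Legendre_uminus:
  fixes p :: int
  assumes "prime p" "p > 2"
  shows "Legendre (- a) p = (if p mod 4 = 1 then Legendre a p else - Legendre a p)"
  using Legendre_mult[OF assms, of "-1" a] Legendre_minus_one[OF assms] by simp

lemma Legendre_distinct_primes_sign:
  fixes p q :: int
  assumes "prime p" "prime q" "p \<noteq> q"
  shows "Legendre q p \<in> {-1, 1}"
proof -
  have "\<not> p dvd q"
    using assms primes_dvd_imp_eq by (metis prime_gt_0_int pos_int_cases)
  then show ?thesis using Legendre_cases[of q p] Legendre_eq_0_iff[of q p] by auto
qed

lemma Legendre_reciprocity:
  fixes p q :: int
  assumes "prime p" "prime q" "p > 2" "q > 2"
  shows "Legendre p q = (if p mod 4 = 3 \<and> q mod 4 = 3 then - Legendre q p else Legendre q p)"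
proof (cases "p = q")
  case False
  have "odd p" "odd q" using assms prime_odd_int by blast+
  have "even ((p - 1) div 2) \<longleftrightarrow> p mod 4 \<noteq> 3" "even ((q - 1) div 2) \<longleftrightarrow> q mod 4 \<noteq> 3"
    using \<open>odd p\<close> \<open>odd q\<close> by presburger+
  then have "(-1::int) ^ nat ((p - 1) div 2 * ((q - 1) div 2))
      = (if p mod 4 = 3 \<and> q mod 4 = 3 then -1 else 1)"
    using assms minus_one_power_nat[of "(p - 1) div 2 * ((q - 1) div 2)"] by auto
  then have recip: "Legendre p q * Legendre q p = (if p mod 4 = 3 \<and> q mod 4 = 3 then -1 else 1)"
    using Quadratic_Reciprocity_int[of p q] assms False by simp
  have "Legendre q p * Legendre q p = 1"
    using Legendre_distinct_primes_sign[OF assms(1,2) False] by auto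
  then have "Legendre p q = (Legendre p q * Legendre q p) * Legendre q p"
    by (simp add: mult.assoc)
  then show ?thesis unfolding recip by simp
qed (simp add: Legendre_eq_0_iff)

lemma inj_on_square_mod_prime:
  fixes p :: int
  assumes "prime p"
  shows "inj_on (\<lambda>y. y\<^sup>2 mod p) {1..(p - 1) div 2}"
proof (rule inj_onI)
  fix a b assume a: "a \<in> {1..(p - 1) div 2}" and b: "b \<in> {1..(p - 1) div 2}"
    and eq: "a\<^sup>2 mod p = b\<^sup>2 mod p"
  have "p dvd (a - b) * (a + b)"
    using eq by (simp add: mod_eq_dvd_iff power2_eq_square algebra_simps)
  moreover have "\<not> p dvd a + b"
  proof -
    have "2 * ((p - 1) div 2) \<le> p - 1" by presburger
    then show ?thesis using a b zdvd_not_zless[of "a + b" p] by auto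
  qed
  ultimately have "p dvd a - b" using assms prime_dvd_mult_iff by blast
  moreover have "\<bar>a - b\<bar> < p" using a b by auto
  ultimately show "a = b" using dvd_imp_le_int[of "a - b" p] by fastforce
qed

lemma quadratic_residues_eq_squares:
  fixes p :: int
  assumes "prime p" "p > 2"
  shows "{x\<in>{0..<p}. Legendre x p = 1} = (\<lambda>y. y\<^sup>2 mod p) ` {1..(p - 1) div 2}"
proof (intro equalityI subsetI)
  have half: "2 * ((p - 1) div 2) = p - 1"
    using prime_odd_int[OF assms] by (auto elim!: oddE)
  fix x assume "x \<in> {x\<in>{0..<p}. Legendre x p = 1}"
  then have x: "0 \<le> x" "x < p" "\<not> [x = 0] (mod p)" "QuadRes p x"
    by (auto simp: Legendre_def split: if_splits)
  then obtain y where "[y\<^sup>2 = x] (mod p)" unfolding QuadRes_def by blast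
  moreover have "[(y mod p)\<^sup>2 = y\<^sup>2] (mod p)" by (intro cong_pow) (simp add: cong_def)
  ultimately have z: "[(y mod p)\<^sup>2 = x] (mod p)" by (rule cong_trans[rotated])
  moreover have "[(p - y mod p)\<^sup>2 = (y mod p)\<^sup>2] (mod p)"
    by (simp add: cong_iff_dvd_diff power2_eq_square algebra_simps)
  ultimately have z': "[(p - y mod p)\<^sup>2 = x] (mod p)" by (rule cong_trans[rotated])
  have "y mod p \<noteq> 0" using z x(3) by (auto simp: cong_def)
  moreover have "0 \<le> y mod p" "y mod p < p" using assms by auto
  moreover have "x = (y mod p)\<^sup>2 mod p" "x = (p - y mod p)\<^sup>2 mod p"
    using z z' x(1,2) by (simp_all add: cong_def)
  ultimately show "x \<in> (\<lambda>y. y\<^sup>2 mod p) ` {1..(p - 1) div 2}"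
    by (cases "y mod p \<le> (p - 1) div 2")
      (use half in \<open>auto intro: image_eqI[of _ _ "y mod p"] image_eqI[of _ _ "p - y mod p"]\<close>)
next
  have half: "2 * ((p - 1) div 2) = p - 1"
    using prime_odd_int[OF assms] by (auto elim!: oddE)
  fix x assume "x \<in> (\<lambda>y. y\<^sup>2 mod p) ` {1..(p - 1) div 2}"
  then obtain y where y: "y \<in> {1..(p - 1) div 2}" "x = y\<^sup>2 mod p" by auto
  have "y < p" using y(1) half by simp
  then have "\<not> p dvd y" using y zdvd_not_zless[of y p] by auto
  then have "\<not> p dvd y\<^sup>2" using prime_dvd_power_iff[OF assms(1)] by simp
  then have "Legendre x p = 1"
    using y by (auto simp: Legendre_def QuadRes_def cong_def dvd_eq_mod_eq_0)
  then show "x \<in> {x\<in>{0..<p}. Legendre x p = 1}" using y assms by simp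
qed

lemma card_quadratic_residues:
  fixes p :: int
  assumes "prime p" "p > 2"
  shows "int (card {x\<in>{0..<p}. Legendre x p = 1}) = (p - 1) div 2"
  unfolding quadratic_residues_eq_squares[OF assms]
    card_image[OF inj_on_square_mod_prime[OF assms(1)]]
  using assms by simp

lemma card_quadratic_nonresidues:
  fixes p :: int
  assumes "prime p" "p > 2"
  shows "int (card {x\<in>{0..<p}. Legendre x p = -1}) = (p - 1) div 2"
proof -
  let ?R = "{x\<in>{0..<p}. Legendre x p = 1}" and ?N = "{x\<in>{0..<p}. Legendre x p = -1}"
  have "{1..<p} = ?R \<union> ?N"
  proof (intro equalityI subsetI)
    fix x assume x: "x \<in> {1..<p}"
    then have "Legendre x p \<noteq> 0" using zdvd_not_zless Legendre_eq_0_iff by auto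
    then show "x \<in> ?R \<union> ?N" using x Legendre_cases[of x p] by auto
  next
    fix x assume "x \<in> ?R \<union> ?N"
    moreover have "Legendre 0 p = 0" by (simp add: Legendre_eq_0_iff)
    ultimately show "x \<in> {1..<p}" by (cases "x = 0") auto
  qed
  moreover have "card (?R \<union> ?N) = card ?R + card ?N"
    by (rule card_Un_disjoint) (auto intro: finite_subset[of _ "{0..<p}"])
  ultimately have "card {1..<p} = card ?R + card ?N" by simp
  moreover have "2 * ((p - 1) div 2) = p - 1"
    using prime_odd_int[OF assms] by (auto elim!: oddE)
  ultimately show ?thesis using card_quadratic_residues[OF assms] assms by simp
qed

lemma bij_betw_mod_pair:
  fixes m q :: int
  assumes "m > 0" "q > 0" "coprime m q"
  shows "bij_betw (\<lambda>x. (x mod m, x mod q)) {0..<m * q} ({0..<m} \<times> {0..<q})"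
  unfolding bij_betw_def
proof
  show "inj_on (\<lambda>x. (x mod m, x mod q)) {0..<m * q}"
  proof (rule inj_onI)
    fix x y assume "x \<in> {0..<m * q}" "y \<in> {0..<m * q}"
      and "(x mod m, x mod q) = (y mod m, y mod q)"
    then have "[x = y] (mod m * q)"
      using assms(3) by (intro coprime_cong_mult) (simp_all add: cong_def)
    then show "x = y"
      using \<open>x \<in> {0..<m * q}\<close> \<open>y \<in> {0..<m * q}\<close> by (simp add: cong_def)
  qed
next
  show "(\<lambda>x. (x mod m, x mod q)) ` {0..<m * q} = {0..<m} \<times> {0..<q}"
  proof safe
    fix a b assume ab: "a \<in> {0..<m}" "b \<in> {0..<q}"
    obtain x where "[x = a] (mod m)" "[x = b] (mod q)"
      using binary_chinese_remainder_int[OF assms(3)] by blast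
    then have "(x mod (m * q)) mod m = a" "(x mod (m * q)) mod q = b"
      using ab by (simp_all add: cong_def mod_mod_cancel)
    moreover have "x mod (m * q) \<in> {0..<m * q}" using assms by simp
    ultimately show "(a, b) \<in> (\<lambda>x. (x mod m, x mod q)) ` {0..<m * q}"
      by (metis (no_types, lifting) image_eqI)
  qed (use assms in auto)
qed

lemma card_periodic_crt:
  fixes m q :: int
  assumes "m > 0" "q > 0" "coprime m q"
    and "\<And>x. P (x mod m) = P x" "\<And>x. Q (x mod q) = Q x"
  shows "card {x\<in>{0..<m * q}. P x \<and> Q x} = card {x\<in>{0..<m}. P x} * card {x\<in>{0..<q}. Q x}"
proof -
  have "bij_betw (\<lambda>x. (x mod m, x mod q)) {x\<in>{0..<m * q}. P x \<and> Q x}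
      {y\<in>{0..<m} \<times> {0..<q}. P (fst y) \<and> Q (snd y)}"
    by (rule bij_betw_Collect[OF bij_betw_mod_pair[OF assms(1-3)]]) (simp add: assms(4,5))
  moreover have "{y\<in>{0..<m} \<times> {0..<q}. P (fst y) \<and> Q (snd y)}
      = {x\<in>{0..<m}. P x} \<times> {x\<in>{0..<q}. Q x}" by auto
  ultimately show ?thesis by (simp add: bij_betw_same_card card_cartesian_product)
qed

lemma periodic_mod_dvd:
  fixes m M :: int
  assumes "\<And>x. P (x mod m) = P x" "m dvd M"
  shows "P (x mod M) = P x"
  by (metis assms mod_mod_cancel)

lemma card_periodic_crt_prod:
  fixes m :: "'i \<Rightarrow> int"
  assumes "finite I" "\<forall>i\<in>I. m i > 0" "pairwise (\<lambda>i j. coprime (m i) (m j)) I"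
    and "\<And>i x. i \<in> I \<Longrightarrow> P i (x mod m i) = P i x"
  shows "card {x\<in>{0..<\<Prod>i\<in>I. m i}. \<forall>i\<in>I. P i x} = (\<Prod>i\<in>I. card {x\<in>{0..<m i}. P i x})"
  using assms
proof (induction I rule: finite_induct)
  case empty
  have "{0..<1::int} = {0}" by auto
  then show ?case by simp
next
  case (insert j I)
  let ?M = "\<Prod>i\<in>I. m i"
  have "coprime (m j) ?M"
    using insert.hyps insert.prems(2) by (auto intro!: prod_coprime_right simp: pairwise_insert)
  moreover have "(\<forall>i\<in>I. P i (x mod ?M)) = (\<forall>i\<in>I. P i x)" for x
    using insert.prems(3) periodic_mod_dvd[where P = "P i" and m = "m i" for i]
    by (metis insert.hyps(1) insertCI dvd_prodI)
  ultimately have "card {x\<in>{0..<m j * ?M}. P j x \<and> (\<forall>i\<in>I. P i x)}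
      = card {x\<in>{0..<m j}. P j x} * card {x\<in>{0..<?M}. \<forall>i\<in>I. P i x}"
    using insert.prems by (intro card_periodic_crt) (auto intro: prod_pos)
  moreover have "card {x\<in>{0..<?M}. \<forall>i\<in>I. P i x} = (\<Prod>i\<in>I. card {x\<in>{0..<m i}. P i x})"
    using insert by (simp add: pairwise_insert)
  ultimately show ?case using insert.hyps by simp
qed

lemma card_periodic_shift:
  fixes m :: int
  assumes "m > 0" "\<And>x. P (x mod m) = P x"
  shows "card {x\<in>{1..m}. P x} = card {x\<in>{0..<m}. P x}"
proof -
  have mod_m: "x mod m = (if x = m then 0 else x)" if "x \<in> {1..m}" for x
    using that by (cases "x = m") auto
  have "bij_betw (\<lambda>x. x mod m) {1..m} {0..<m}"
  proof (rule bij_betw_byWitness[where f' = "\<lambda>x. if x = 0 then m else x"])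
    show "(\<lambda>x. x mod m) ` {1..m} \<subseteq> {0..<m}" using assms(1) by auto
  qed (use assms(1) mod_m in auto)
  then have "bij_betw (\<lambda>x. x mod m) {x\<in>{1..m}. P x} {x\<in>{0..<m}. P x}"
    by (rule bij_betw_Collect) (simp add: assms(2))
  then show ?thesis by (rule bij_betw_same_card)
qed

text \<open>The character \<open>\<chi>\<^sub>-\<^sub>4\<close> modulo 4; its value \<open>-1\<close> at even arguments is junk.\<close>
definition chi4 :: "int \<Rightarrow> int" where
  "chi4 x = (if x mod 4 = 1 then 1 else -1)"

lemma chi4_mult:
  assumes "odd x" "odd y"
  shows "chi4 (x * y) = chi4 x * chi4 y"
proof -
  have "x mod 4 = 1 \<or> x mod 4 = 3" "y mod 4 = 1 \<or> y mod 4 = 3" using assms by presburger+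
  moreover have "(x * y) mod 4 = (x mod 4) * (y mod 4) mod 4" by (simp add: mod_mult_eq)
  ultimately show ?thesis by (auto simp: chi4_def)
qed

lemma chi4_cong: "[x = y] (mod 4) \<Longrightarrow> chi4 x = chi4 y"
  by (simp add: chi4_def cong_def)

lemma chi4_uminus: "odd x \<Longrightarrow> chi4 (- x) = - chi4 x"
  unfolding chi4_def by presburger

lemma multiplicative_odd_prod_powers:
  fixes g :: "int \<Rightarrow> int"
  assumes mult: "\<And>x y. odd x \<Longrightarrow> odd y \<Longrightarrow> g (x * y) = g x * g y" and "g 1 = 1"
    and "finite A" "\<forall>q\<in>A. odd q"
  shows "g (\<Prod>q\<in>A. q ^ e q) = (\<Prod>q\<in>A. g q ^ e q)"
  using assms(3,4)
proof (induction A rule: finite_induct)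
  case empty
  show ?case using \<open>g 1 = 1\<close> by simp
next
  case (insert q A)
  have "odd q" using insert.prems by simp
  have power: "g (q ^ k) = g q ^ k" for k
    using \<open>g 1 = 1\<close> mult \<open>odd q\<close> by (induction k) simp_all
  have "odd (\<Prod>q\<in>A. q ^ e q)" using insert by (simp add: even_prod_iff)
  then show ?case
    using insert \<open>odd q\<close> mult[of "q ^ e q"] power by simp
qed

lemma kronecker_eq_odd_multiplicative:
  fixes g :: "int \<Rightarrow> int"
  assumes mult: "\<And>x y. odd x \<Longrightarrow> odd y \<Longrightarrow> g (x * y) = g x * g y" and "g 1 = 1"
    and "a > 0" "odd a" and agree: "\<And>q. prime q \<Longrightarrow> q dvd a \<Longrightarrow> kron_prime M q = g q"
  shows "kronecker M a = g a"
proof -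
  have odd_factors: "\<forall>q\<in>prime_factors a. odd q"
    using \<open>odd a\<close> by (auto dest: dvd_trans)
  have "kronecker M a = (\<Prod>q\<in>prime_factors a. kron_prime M q ^ multiplicity q a)"
    using \<open>a > 0\<close> by (simp add: kronecker_def)
  also have "\<dots> = (\<Prod>q\<in>prime_factors a. g q ^ multiplicity q a)"
    by (intro prod.cong refl) (simp add: agree in_prime_factors_iff)
  also have "\<dots> = g (\<Prod>q\<in>prime_factors a. q ^ multiplicity q a)"
    using multiplicative_odd_prod_powers[OF mult \<open>g 1 = 1\<close> _ odd_factors] by simp
  also have "(\<Prod>q\<in>prime_factors a. q ^ multiplicity q a) = a"
    using prod_prime_factors[of a] \<open>a > 0\<close> by simp
  finally show ?thesis .
qed

lemma kronecker_even:
  fixes M a :: int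
  assumes "a > 0" "even a" "even M"
  shows "kronecker M a = 0"
proof -
  have "2 \<in> prime_factors a" "multiplicity 2 a > 0"
    using assms by (auto intro: prime_factorsI simp: prime_multiplicity_gt_zero_iff)
  then have "(\<Prod>q\<in>prime_factors a. kron_prime M q ^ multiplicity q a) = 0"
    using assms by (auto intro!: bexI[of _ 2] simp: prod_zero_iff kron_prime_def)
  then show ?thesis using assms by (simp add: kronecker_def)
qed

lemma odd_prime_gt_2:
  fixes q :: int
  assumes "prime q" "odd q"
  shows "q > 2"
  using assms prime_ge_2_int[of q] by (cases "q = 2") auto

lemma kronecker_4p_odd:
  fixes p a :: int
  assumes "prime p" "p mod 4 = 3" "a > 0" "odd a"
  shows "kronecker (4 * p) a = Legendre a p * chi4 a"
proof (rule kronecker_eq_odd_multiplicative[OF _ _ assms(3,4)])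
  have "odd p" using assms(2) by presburger
  then have "p > 2" using assms(1) odd_prime_gt_2 by blast
  show "Legendre (x * y) p * chi4 (x * y) = Legendre x p * chi4 x * (Legendre y p * chi4 y)"
    if "odd x" "odd y" for x y
    using Legendre_mult[OF assms(1) \<open>p > 2\<close>] chi4_mult[OF that] by simp
  show "Legendre 1 p * chi4 1 = 1"
    using Legendre_square[OF assms(1), of 1] \<open>p > 2\<close> by (simp add: chi4_def)
  fix q assume q: "prime q" "q dvd a"
  then have "odd q" using \<open>odd a\<close> by (auto dest: dvd_trans)
  then have "q > 2" using q odd_prime_gt_2 by blast
  have "\<not> q dvd 2" using \<open>q > 2\<close> zdvd_imp_le[of q 2] by auto
  then have "Legendre 4 q = 1" using Legendre_square[OF q(1), of 2] by simp
  then have "kron_prime (4 * p) q = Legendre p q"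
    using Legendre_mult[OF q(1) \<open>q > 2\<close>, of 4 p] \<open>q > 2\<close> by (simp add: kron_prime_def)
  then show "kron_prime (4 * p) q = Legendre q p * chi4 q"
    using Legendre_reciprocity[OF assms(1) q(1) \<open>p > 2\<close> \<open>q > 2\<close>] assms(2) \<open>odd q\<close>
    by (auto simp: chi4_def) presburger+
qed

lemma kronecker_prime_1mod4_odd:
  fixes p a :: int
  assumes "prime p" "p mod 4 = 1" "a > 0" "odd a"
  shows "kronecker p a = Legendre a p"
proof (rule kronecker_eq_odd_multiplicative[OF _ _ assms(3,4)])
  have "odd p" using assms(2) by presburger
  then have "p > 2" using assms(1) odd_prime_gt_2 by blast
  show "Legendre (x * y) p = Legendre x p * Legendre y p" for x y
    using Legendre_mult[OF assms(1) \<open>p > 2\<close>] .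
  show "Legendre 1 p = 1"
    using Legendre_square[OF assms(1), of 1] \<open>p > 2\<close> by simp
  fix q assume q: "prime q" "q dvd a"
  then have "q > 2" using \<open>odd a\<close> odd_prime_gt_2 by (auto dest: dvd_trans)
  then show "kron_prime p q = Legendre q p"
    using Legendre_reciprocity[OF assms(1) q(1) \<open>p > 2\<close> \<open>q > 2\<close>] assms(2)
    by (simp add: kron_prime_def)
qed

text \<open>For \<open>x > 0\<close>, \<open>p1 mod 4 = 3\<close> and \<open>q i mod 4 = 1\<close>, \<open>principal_genus p1 q I x\<close>
  is the condition \<open>\<chi>\<^sub>4\<^sub>p\<^sub>1(x) = 1 \<and> (\<forall>i \<in> I. \<chi>\<^sub>q\<^sub>i(x) = 1)\<close>
  (lemma \<open>kronecker_iff_principal_genus\<close>), rewritten by reciprocity in terms of Legendre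
  symbols so that it is visibly periodic in \<open>x\<close>.\<close>
definition principal_genus :: "int \<Rightarrow> (nat \<Rightarrow> int) \<Rightarrow> nat set \<Rightarrow> int \<Rightarrow> bool" where
  "principal_genus p1 q I x \<longleftrightarrow>
     odd x \<and> Legendre x p1 * chi4 x = 1 \<and> (\<forall>i\<in>I. Legendre x (q i) = 1)"

lemma principal_genus_cong:
  assumes "[x = y] (mod M)" "4 * p1 dvd M" "\<forall>i\<in>I. q i dvd M"
  shows "principal_genus p1 q I x = principal_genus p1 q I y"
proof -
  have mod_4: "[x = y] (mod 4)" and mod_p1: "[x = y] (mod p1)"
    using assms(1,2) cong_dvd_modulus dvd_mult_left dvd_mult_right by metis+
  have "[x = y] (mod 2)" using mod_4 cong_dvd_modulus[of x y 4 2] by simp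
  then have "odd x = odd y" by (simp add: cong_def even_iff_mod_2_eq_zero)
  moreover have "chi4 x = chi4 y" using mod_4 by (rule chi4_cong)
  moreover have "Legendre x p1 = Legendre y p1" using mod_p1 by (rule Legendre_cong)
  moreover have "Legendre x (q i) = Legendre y (q i)" if "i \<in> I" for i
    using assms(1,3) that by (metis Legendre_cong cong_dvd_modulus)
  ultimately show ?thesis
    unfolding principal_genus_def by simp
qed

lemma principal_genus_uminus:
  assumes "prime p1" "p1 mod 4 = 3" "\<forall>i\<in>I. prime (q i) \<and> q i mod 4 = 1"
  shows "principal_genus p1 q I (- x) = principal_genus p1 q I x"
proof (cases "odd x")
  case True
  have "odd p1" using assms(2) by presburger
  then have "Legendre (- x) p1 * chi4 (- x) = Legendre x p1 * chi4 x"
    using Legendre_uminus[OF assms(1)] chi4_uminus[OF True] assms(1,2) odd_prime_gt_2 by simp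
  moreover have "Legendre (- x) (q i) = Legendre x (q i)" if "i \<in> I" for i
  proof -
    have "q i mod 4 = 1" using assms(3) that by simp
    then have "odd (q i)" by presburger
    then show ?thesis using Legendre_uminus assms(3) that odd_prime_gt_2 by simp
  qed
  ultimately show ?thesis using True by (simp add: principal_genus_def)
qed (simp add: principal_genus_def)

lemma kronecker_iff_principal_genus:
  assumes "prime p1" "p1 mod 4 = 3" "\<forall>i\<in>I. prime (q i) \<and> q i mod 4 = 1" "a > 0"
  shows "(kronecker (4 * p1) a = 1 \<and> (\<forall>i\<in>I. kronecker (q i) a = 1))
    \<longleftrightarrow> principal_genus p1 q I a"
proof (cases "odd a")
  case True
  then show ?thesis
    using kronecker_4p_odd[OF assms(1,2,4) True] kronecker_prime_1mod4_odd assms(3,4)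
    by (simp add: principal_genus_def)
next
  case False
  then show ?thesis
    using kronecker_even[OF assms(4), of "4 * p1"] by (simp add: principal_genus_def)
qed

lemma card_principal_genus_4p:
  fixes p :: int
  assumes "prime p" "p > 2"
  shows "int (card {x\<in>{0..<4 * p}. principal_genus p q {} x}) = p - 1"
proof -
  have coprime: "coprime 4 p"
    using prime_odd_int[OF assms] by (simp add: coprime_power_left_iff[of 2 2, simplified])
  have residue_4: "{x\<in>{0..<4}. x mod 4 = r} = {r}" if "r \<in> {0..<4}" for r :: int
    using that by (auto simp: mod_pos_pos_trivial)
  have card_part: "int (card {x\<in>{0..<4 * p}. x mod 4 = r \<and> Legendre x p = s}) = (p - 1) div 2"
    if "r \<in> {0..<4}" "s \<in> {-1, 1}" for r s
  proof -
    have "card {x\<in>{0..<4 * p}. x mod 4 = r \<and> Legendre x p = s}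
        = card {x\<in>{0..<4}. x mod 4 = r} * card {x\<in>{0..<p}. Legendre x p = s}"
      using assms coprime by (intro card_periodic_crt) simp_all
    then show ?thesis
      using that residue_4 card_quadratic_residues[OF assms] card_quadratic_nonresidues[OF assms]
      by auto
  qed
  have "{x\<in>{0..<4 * p}. principal_genus p q {} x}
      = {x\<in>{0..<4 * p}. x mod 4 = 1 \<and> Legendre x p = 1}
        \<union> {x\<in>{0..<4 * p}. x mod 4 = 3 \<and> Legendre x p = -1}"
  proof -
    have "odd x \<longleftrightarrow> x mod 4 = 1 \<or> x mod 4 = 3" for x :: int by presburger
    then show ?thesis
      using Legendre_cases by (auto simp: principal_genus_def chi4_def)
  qed
  moreover have "card ({x\<in>{0..<4 * p}. x mod 4 = 1 \<and> Legendre x p = 1}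
        \<union> {x\<in>{0..<4 * p}. x mod 4 = 3 \<and> Legendre x p = -1})
      = card {x\<in>{0..<4 * p}. x mod 4 = 1 \<and> Legendre x p = 1}
        + card {x\<in>{0..<4 * p}. x mod 4 = 3 \<and> Legendre x p = -1}"
    by (rule card_Un_disjoint) (auto intro: finite_subset[of _ "{0..<4 * p}"])
  moreover have "2 * ((p - 1) div 2) = p - 1"
    using prime_odd_int[OF assms] by (auto elim!: oddE)
  ultimately show ?thesis using card_part[of 1 1] card_part[of 3 "-1"] by simp
qed

lemma prod_half_pred_5mod8:
  fixes q :: "'i \<Rightarrow> int"
  assumes "finite I" "\<forall>i\<in>I. q i mod 8 = 5"
  shows "\<exists>u. odd u \<and> (\<Prod>i\<in>I. (q i - 1) div 2) = 2 ^ card I * u"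
proof
  have "(q i - 1) div 2 = 2 * ((q i - 1) div 4)" "odd ((q i - 1) div 4)" if "i \<in> I" for i
  proof -
    have "q i mod 8 = 5" using assms(2) that by simp
    then show "(q i - 1) div 2 = 2 * ((q i - 1) div 4)" "odd ((q i - 1) div 4)" by presburger+
  qed
  then show "odd (\<Prod>i\<in>I. (q i - 1) div 4)
      \<and> (\<Prod>i\<in>I. (q i - 1) div 2) = 2 ^ card I * (\<Prod>i\<in>I. (q i - 1) div 4)"
    using assms(1) by (simp add: even_prod_iff prod.distrib)
qed

lemma coprime_4p_prod_primes:
  fixes p1 :: int and q :: "'i \<Rightarrow> int"
  assumes "prime p1" "\<forall>i\<in>I. prime (q i) \<and> odd (q i) \<and> q i \<noteq> p1"
  shows "coprime (4 * p1) (\<Prod>i\<in>I. q i)"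
proof (rule prod_coprime_right)
  fix i assume "i \<in> I"
  then have "coprime 2 (q i)" "coprime p1 (q i)"
    using assms by (auto simp: coprime_left_2_iff_odd intro: primes_coprime)
  then show "coprime (4 * p1) (q i)"
    using coprime_power_left_iff[of 2 2 "q i"] by simp
qed

lemma card_principal_genus_residues:
  fixes p1 :: int and q :: "nat \<Rightarrow> int"
  assumes p1: "prime p1" "p1 mod 8 = 3" and "finite I"
    and q: "\<forall>i\<in>I. prime (q i) \<and> q i mod 8 = 5" and "inj_on q I"
  shows "\<exists>u. odd u \<and>
    int (card {x\<in>{0..<4 * p1 * (\<Prod>i\<in>I. q i)}. principal_genus p1 q I x}) = 2 ^ Suc (card I) * u"
proof -
  let ?Q = "\<Prod>i\<in>I. q i" and ?R = "\<lambda>x. \<forall>i\<in>I. Legendre x (q i) = 1"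
  have "odd p1" using p1(2) by presburger
  then have "p1 > 2" using p1(1) odd_prime_gt_2 by blast
  have q_odd: "odd (q i)" "q i > 2" "q i \<noteq> p1" if "i \<in> I" for i
  proof -
    have "q i mod 8 = 5" using q that by simp
    then show "odd (q i)" "q i \<noteq> p1" using p1(2) by presburger+
    then show "q i > 2" using q that odd_prime_gt_2 by blast
  qed
  have "Legendre (x mod ?Q) (q i) = Legendre x (q i)" if "i \<in> I" for i x
  proof (rule Legendre_cong)
    show "[x mod ?Q = x] (mod q i)"
      by (rule cong_dvd_modulus[OF _ dvd_prodI[OF \<open>finite I\<close> that]]) (simp add: cong_def)
  qed
  then have "?R (x mod ?Q) = ?R x" for x by simp
  moreover have "principal_genus p1 q {} (x mod (4 * p1)) = principal_genus p1 q {} x" for x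
    by (rule principal_genus_cong[of _ _ "4 * p1"]) (simp_all add: cong_def)
  moreover have "coprime (4 * p1) ?Q"
    by (rule coprime_4p_prod_primes[OF p1(1)]) (use q q_odd in auto)
  moreover have "?Q > 0" using q_odd by (intro prod_pos) force
  ultimately have "card {x\<in>{0..<4 * p1 * ?Q}. principal_genus p1 q {} x \<and> ?R x}
      = card {x\<in>{0..<4 * p1}. principal_genus p1 q {} x} * card {x\<in>{0..<?Q}. ?R x}"
    using \<open>p1 > 2\<close> by (intro card_periodic_crt) simp_all
  also have "card {x\<in>{0..<?Q}. ?R x} = (\<Prod>i\<in>I. card {x\<in>{0..<q i}. Legendre x (q i) = 1})"
    using q q_odd \<open>finite I\<close> \<open>inj_on q I\<close>
    by (intro card_periodic_crt_prod)
      (auto simp: pairwise_def inj_on_def prime_gt_0_int intro: primes_coprime)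
  finally have "int (card {x\<in>{0..<4 * p1 * ?Q}. principal_genus p1 q I x})
      = (p1 - 1) * (\<Prod>i\<in>I. (q i - 1) div 2)"
    using card_principal_genus_4p[OF p1(1) \<open>p1 > 2\<close>] card_quadratic_residues q q_odd
    by (simp add: principal_genus_def of_nat_prod)
  moreover obtain u where "odd u" "(\<Prod>i\<in>I. (q i - 1) div 2) = 2 ^ card I * u"
    using prod_half_pred_5mod8[OF \<open>finite I\<close>] q by blast
  moreover have "p1 - 1 = 2 * ((p1 - 1) div 2)" "odd ((p1 - 1) div 2)"
    using p1(2) by presburger+
  ultimately have "int (card {x\<in>{0..<4 * p1 * ?Q}. principal_genus p1 q I x})
      = 2 ^ Suc (card I) * ((p1 - 1) div 2 * u)"
    by (metis mult.assoc mult.left_commute power_Suc)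
  then show ?thesis using \<open>odd u\<close> \<open>odd ((p1 - 1) div 2)\<close> by auto
qed

lemma power2_mod_16: "(x::int)\<^sup>2 mod 16 = (x mod 8)\<^sup>2 mod 16"
proof -
  define k r where "k = x div 8" and "r = x mod 8"
  have "x = 8 * k + r" unfolding k_def r_def by simp
  then have "x\<^sup>2 - r\<^sup>2 = 16 * (k * r + 4 * k\<^sup>2)" by (simp add: power2_eq_square algebra_simps)
  then show ?thesis unfolding r_def[symmetric] by (simp add: mod_eq_dvd_iff)
qed

lemma power2_mod_16_reflect:
  fixes a D :: int
  assumes "odd a" "D mod 8 = 4"
  shows "a\<^sup>2 mod 16 + (D - a)\<^sup>2 mod 16 = 10"
proof -
  have "(D - a) mod 8 = (4 - a mod 8) mod 8"
    using assms(2) by (metis mod_diff_eq)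
  moreover have "a mod 8 = 1 \<or> a mod 8 = 3 \<or> a mod 8 = 5 \<or> a mod 8 = 7"
    using assms(1) by presburger
  ultimately show ?thesis
    using power2_mod_16[of a] power2_mod_16[of "D - a"] by auto
qed

lemma sum_power2_reflect_mod_16:
  fixes A :: "int set"
  assumes "finite A" "\<forall>a\<in>A. odd a \<and> D - a \<in> A" "D mod 8 = 4"
  shows "[(\<Sum>a\<in>A. a\<^sup>2) = 5 * int (card A)] (mod 16)"
proof -
  let ?S = "\<Sum>a\<in>A. a\<^sup>2 mod 16"
  have "(\<Sum>a\<in>A. (D - a)\<^sup>2 mod 16) = ?S"
    using assms(2) by (intro sum.reindex_bij_witness[of _ "\<lambda>a. D - a" "\<lambda>a. D - a"]) auto
  then have "2 * ?S = (\<Sum>a\<in>A. a\<^sup>2 mod 16 + (D - a)\<^sup>2 mod 16)"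
    by (simp add: sum.distrib)
  also have "\<dots> = 10 * int (card A)"
    using assms(2,3) power2_mod_16_reflect by simp
  finally have "?S = 5 * int (card A)" by simp
  then show ?thesis by (simp add: cong_def mod_sum_eq[symmetric])
qed

lemma principal_genus_reflect:
  assumes "prime p1" "p1 mod 4 = 3" "\<forall>i\<in>I. prime (q i) \<and> q i mod 4 = 1"
    and "4 * p1 dvd M" "\<forall>i\<in>I. q i dvd M" "principal_genus p1 q I a"
  shows "principal_genus p1 q I (M - a)"
proof -
  have "principal_genus p1 q I (M - a) = principal_genus p1 q I (- a)"
    using assms(4,5) by (intro principal_genus_cong[of _ _ M]) (simp_all add: cong_iff_dvd_diff)
  then show ?thesis using principal_genus_uminus[OF assms(1-3)] assms(6) by simp
qed

lemma sum_squares_principal_genus_mod_16: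
  fixes p1 :: int and q :: "nat \<Rightarrow> int"
  assumes p1: "prime p1" "p1 mod 8 = 3" and "finite I"
    and q: "\<forall>i\<in>I. prime (q i) \<and> q i mod 8 = 5" and "inj_on q I"
  shows "\<exists>u. odd u \<and> [(\<Sum>a\<in>{a\<in>{1..4 * p1 * (\<Prod>i\<in>I. q i)}. principal_genus p1 q I a}. a\<^sup>2)
    = 2 ^ Suc (card I) * u] (mod 16)"
proof -
  let ?Q = "\<Prod>i\<in>I. q i" and ?PG = "principal_genus p1 q I"
  let ?M = "4 * p1 * ?Q"
  let ?S = "{a\<in>{1..?M}. ?PG a}"
  have "p1 mod 4 = 3" "odd p1" using p1(2) by presburger+
  have "q i mod 4 = 1 \<and> odd (q i)" if "i \<in> I" for i
  proof -
    have "q i mod 8 = 5" using q that by simp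
    then show ?thesis by presburger
  qed
  then have q4: "\<forall>i\<in>I. prime (q i) \<and> q i mod 4 = 1" and "\<forall>i\<in>I. odd (q i)"
    using q by simp_all
  have dvd: "4 * p1 dvd ?M" "\<forall>i\<in>I. q i dvd ?M"
    using \<open>finite I\<close> by (simp_all add: dvd_mult dvd_prodI)
  have periodic: "?PG (x mod ?M) = ?PG x" for x
    using dvd by (intro principal_genus_cong[of _ _ ?M]) (simp_all add: cong_def)
  have "?Q > 0" using q by (intro prod_pos) (simp add: prime_gt_0_int)
  then have "?M > 0" using prime_gt_0_int[OF p1(1)] by simp
  then have "card ?S = card {x\<in>{0..<?M}. ?PG x}"
    using periodic by (rule card_periodic_shift)
  then obtain u where "odd u" "int (card ?S) = 2 ^ Suc (card I) * u"
    using card_principal_genus_residues[OF p1 \<open>finite I\<close> q \<open>inj_on q I\<close>] by auto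
  have "odd (p1 * ?Q)" using \<open>odd p1\<close> \<open>\<forall>i\<in>I. odd (q i)\<close> \<open>finite I\<close> by (simp add: even_prod_iff)
  then obtain m where "p1 * ?Q = 2 * m + 1" by (rule oddE)
  then have "?M = 8 * m + 4" by (simp add: mult.assoc)
  then have "?M mod 8 = 4" by simp
  moreover have "odd a \<and> ?M - a \<in> ?S" if "a \<in> ?S" for a
  proof -
    have a: "1 \<le> a" "a \<le> ?M" "?PG a" "odd a"
      using that by (auto simp: principal_genus_def)
    have "even ?M" by simp
    then have "a \<noteq> ?M" using \<open>odd a\<close> by blast
    then show ?thesis
      using a principal_genus_reflect[OF p1(1) \<open>p1 mod 4 = 3\<close> q4 dvd a(3)] by auto
  qed
  moreover have "finite ?S" by (rule finite_subset[of _ "{1..?M}"]) auto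
  ultimately have "[(\<Sum>a\<in>?S. a\<^sup>2) = 5 * int (card ?S)] (mod 16)"
    by (intro sum_power2_reflect_mod_16) auto
  then show ?thesis
    using \<open>odd u\<close> \<open>int (card ?S) = 2 ^ Suc (card I) * u\<close>
    by (auto simp: mult.left_commute intro!: exI[of _ "5 * u"])
qed

theorem lemma3p10:
  fixes n :: nat and p :: "nat \<Rightarrow> int" and d :: "nat \<Rightarrow> int" and D :: int
    and G :: "int set" and t1 :: int
  assumes "n \<ge> 1"
    and "inj_on p {1..n}"
    and "\<forall>i\<in>{1..n}. prime (p i)"
    and "p 1 mod 8 = 3"
    and "\<forall>i\<in>{2..n}. p i mod 8 = 5"
    and "d 1 = 4 * p 1"
    and "\<forall>i\<in>{2..n}. d i = p i"
    and "D = (\<Prod>i\<in>{1..n}. d i)"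
    and "G = {a. 1 \<le> a \<and> a \<le> D \<and> (\<forall>i\<in>{1..n}. kronecker (d i) a = 1)}"
    and "t1 = (\<Sum>a\<in>G. a ^ 2)"
  shows "(\<exists>y. odd y \<and> [t1 = 2 ^ n * y] (mod 16)) \<and> (n \<ge> 4 \<longrightarrow> 2 ^ 4 dvd t1)"
proof -
  let ?I = "{2..n}"
  have one_n: "{1..n} = insert 1 ?I" using assms(1) by auto
  have p1: "prime (p 1)" "p 1 mod 4 = 3" using assms(1,3,4) by auto presburger
  have q: "\<forall>i\<in>?I. prime (p i) \<and> p i mod 8 = 5" using assms(3,5) by auto
  have q4: "\<forall>i\<in>?I. prime (p i) \<and> p i mod 4 = 1"
  proof
    fix i assume "i \<in> ?I"
    then have "prime (p i)" "p i mod 8 = 5" using q by auto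
    then show "prime (p i) \<and> p i mod 4 = 1" by presburger
  qed
  have "D = d 1 * (\<Prod>i\<in>?I. d i)" unfolding assms(8) one_n by simp
  also have "(\<Prod>i\<in>?I. d i) = (\<Prod>i\<in>?I. p i)" using assms(7) by (intro prod.cong) auto
  finally have "D = 4 * p 1 * (\<Prod>i\<in>?I. p i)" using assms(6) by simp
  moreover have "(\<forall>i\<in>{1..n}. kronecker (d i) a = 1) \<longleftrightarrow> principal_genus (p 1) p ?I a"
    if "1 \<le> a" for a
    unfolding one_n using assms(6,7) kronecker_iff_principal_genus[OF p1 q4, of a] that by simp
  ultimately have "G = {a\<in>{1..4 * p 1 * (\<Prod>i\<in>?I. p i)}. principal_genus (p 1) p ?I a}"
    unfolding assms(9) atLeastAtMost_iff by blast
  moreover have "inj_on p ?I" using assms(2) by (rule inj_on_subset) auto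
  ultimately obtain u where "odd u" "[t1 = 2 ^ n * u] (mod 16)"
    using sum_squares_principal_genus_mod_16[OF p1(1) assms(4) _ q] assms(1,10) by auto
  moreover have "16 dvd 2 ^ n * u" if "n \<ge> 4"
    using le_imp_power_dvd[OF that, of "2::int"] by simp
  ultimately show ?thesis using cong_dvd_iff by auto
qed

end
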